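(* Let $n,d,\ell$ be positive integers with $n\geqslant\ell\geqslant d$, let $0<\beta\leqslant1$, and let $\boldsymbol{X}$ be a spreadable, $d$-dimensional random array on $[n]$ whose entries take values in a measurable space $\mathcal{X}$, and assume that $\boldsymbol{X}$ is not $(\beta,\ell)$-dissociated. Then there exists a measurable function $f\colon\mathcal{X}^{\binom{[n]}{d}}\to\{0,1\}$ such that for every $I\in\binom{[n]}{\ell}$, \[ \mathbb{P}\big(\big|\mathbb{E}[f(\boldsymbol{X})\,|\,\mathcal{F}_I]-\mathbb{E}[f(\boldsymbol{X})]\big|\geqslant\beta/2\big)\geqslant\beta/2. \]
   Context: $[n]=\{1,\dots,n\}$, $\binom{I}{d}$ is the set of $d$-element subsets of $I$. For $J\subseteq[n]$ with $|J|\geqslant d$, $\boldsymbol{X}_J=\langle X_s:s\in\binom{J}{d}\rangle$ and $\mathcal{F}_J=\sigma(\{X_s:s\in\binom{J}{d}\})$. $\boldsymbol{X}$ is spreadable if for all $J,K\subseteq[n]$ with $|J|=|K|\geqslant d$, $\boldsymbol{X}_J$ and $\boldsymbol{X}_K$ have the same law (identified via the increasing bijection $J\to K$). $\boldsymbol{X}$ is $(\beta,\ell)$-dissociated if for every $J,K\subseteq[n]$ with $|J|,|K|\geqslant d$, $|J|+|K|\leqslant\ell$ and $\max(J)<\min(K)$, and all events $A\in\mathcal{F}_J$, $B\in\mathcal{F}_K$, $|\mathbb{P}(A\cap B)-\mathbb{P}(A)\mathbb{P}(B)|\leqslant\beta$. *)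

theory Defs
  imports "HOL-Probability.Probability"
begin

definition dsubsets :: "nat set \<Rightarrow> nat \<Rightarrow> nat set set" where
  "dsubsets I d = {s. s \<subseteq> I \<and> card s = d}"

definition gen_alg :: "'a measure \<Rightarrow> (nat set \<Rightarrow> 'a \<Rightarrow> 'b) \<Rightarrow> 'b measure \<Rightarrow> nat \<Rightarrow> nat set \<Rightarrow> 'a measure" where
  "gen_alg M X N d J = sigma (space M) {X s -` A \<inter> space M | s A. s \<in> dsubsets J d \<and> A \<in> sets N}"

definition spreadable :: "'a measure \<Rightarrow> (nat set \<Rightarrow> 'a \<Rightarrow> 'b) \<Rightarrow> 'b measure \<Rightarrow> nat \<Rightarrow> nat \<Rightarrow> bool" where
  "spreadable M X N n d \<longleftrightarrow>
    (\<forall>J K \<phi>. J \<subseteq> {1..n} \<and> K \<subseteq> {1..n} \<and> card J = card K \<and> d \<le> card J \<and>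
       strict_mono_on J \<phi> \<and> bij_betw \<phi> J K \<longrightarrow>
       distr M (PiM (dsubsets J d) (\<lambda>_. N)) (\<lambda>\<omega>. \<lambda>s\<in>dsubsets J d. X (\<phi> ` s) \<omega>)
       = distr M (PiM (dsubsets J d) (\<lambda>_. N)) (\<lambda>\<omega>. \<lambda>s\<in>dsubsets J d. X s \<omega>))"

definition dissociated :: "'a measure \<Rightarrow> (nat set \<Rightarrow> 'a \<Rightarrow> 'b) \<Rightarrow> 'b measure \<Rightarrow> nat \<Rightarrow> nat \<Rightarrow> real \<Rightarrow> nat \<Rightarrow> bool" where
  "dissociated M X N n d \<beta> l \<longleftrightarrow>
    (\<forall>J K. J \<subseteq> {1..n} \<and> K \<subseteq> {1..n} \<and> d \<le> card J \<and> d \<le> card K \<and>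
       card J + card K \<le> l \<and> Max J < Min K \<longrightarrow>
       (\<forall>A \<in> sets (gen_alg M X N d J). \<forall>B \<in> sets (gen_alg M X N d K).
          \<bar>measure M (A \<inter> B) - measure M A * measure M B\<bar> \<le> \<beta>))"

end

theory Submission
  imports Defs
begin

text \<open>
  Failure of dissociation yields index sets \<open>J < K\<close> with \<open>|J| + |K| \<le> \<ell>\<close> and events
  \<open>A \<in> F_J\<close>, \<open>B \<in> F_K\<close> with \<open>|P(A \<inter> B) - P(A) P(B)| > \<beta>\<close>. Move \<open>K\<close> by an increasing map onto the top
  block \<open>K' = {n - |K| + 1..n}\<close> and let \<open>f\<close> be the indicator of the corresponding copy \<open>B'\<close> of \<open>B\<close>.
  For every \<open>I\<close> of size \<open>\<ell>\<close> there is room to move \<open>J\<close> increasingly into \<open>I - K'\<close>; by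
  spreadability the moved event \<open>A' \<in> F_I\<close> and \<open>B'\<close> have the same joint law as \<open>A\<close> and \<open>B\<close>.
  Finally \<open>P(A' \<inter> B') - P(A') P(B') = E[1_A' (E[1_B' | F_I] - P(B'))]\<close>, and splitting according to
  whether the deviation \<open>|E[1_B' | F_I] - P(B')|\<close> is below \<open>\<beta>/2\<close> gives
  \<open>\<beta> < \<beta>/2 + P(|E[f(X) | F_I] - E[f(X)]| \<ge> \<beta>/2)\<close>.
\<close>

lemma ex_strict_mono_bij_betw:
  fixes S :: "'a::wellorder set" and T :: "'b::wellorder set"
  assumes "finite S" "finite T" "card S = card T"
  obtains \<phi> where "strict_mono_on S \<phi>" "bij_betw \<phi> S T"
proof -
  obtain g where g: "bij_betw g {..<card S} S" "strict_mono_on {..<card S} g"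
    using ex_bij_betw_strict_mono_card[OF assms(1)] .
  obtain h where h: "bij_betw h {..<card S} T" "strict_mono_on {..<card S} h"
    using ex_bij_betw_strict_mono_card[OF assms(2)] unfolding assms(3) .
  let ?g' = "the_inv_into {..<card S} g"
  have "strict_mono_on S (h \<circ> ?g')"
  proof (rule strict_mono_onI)
    fix x y assume "x \<in> S" "y \<in> S" "x < y"
    then obtain i j where "i < card S" "j < card S" "x = g i" "y = g j"
      using g(1) by (metis bij_betw_imp_surj_on imageE lessThan_iff)
    then show "(h \<circ> ?g') x < (h \<circ> ?g') y"
      using \<open>x < y\<close> g h strict_mono_on_less[OF g(2)] strict_mono_on_less[OF h(2)]
      by (simp add: the_inv_into_f_f bij_betw_def)
  qed
  moreover have "bij_betw (h \<circ> ?g') S T"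
    using bij_betw_trans[OF bij_betw_the_inv_into[OF g(1)] h(1)] .
  ultimately show ?thesis using that by blast
qed

lemma strict_mono_on_Un_if:
  fixes g h :: "'a::linorder \<Rightarrow> 'b::linorder"
  assumes "strict_mono_on J g" "strict_mono_on K h"
    and "\<forall>x\<in>J. \<forall>y\<in>K. x < y" "\<forall>x\<in>J. \<forall>y\<in>K. g x < h y"
  shows "strict_mono_on (J \<union> K) (\<lambda>x. if x \<in> K then h x else g x)"
proof (rule strict_mono_onI)
  fix x y assume "x \<in> J \<union> K" "y \<in> J \<union> K" "x < y"
  then show "(if x \<in> K then h x else g x) < (if y \<in> K then h y else g y)"
    using assms unfolding strict_mono_on_def by (metis Un_iff not_less_iff_gr_or_eq)
qed

lemma ex_strict_mono_extension:
  fixes h :: "'a::wellorder \<Rightarrow> 'b::wellorder"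
  assumes "finite J" "\<forall>x\<in>J. \<forall>y\<in>K. x < y"
    and h: "strict_mono_on K h" "h ` K \<subseteq> K'"
    and I: "card J \<le> card (I - K')" "\<forall>x\<in>I - K'. \<forall>y\<in>K'. x < y"
  obtains \<phi> where "strict_mono_on (J \<union> K) \<phi>" "\<phi> ` J \<subseteq> I" "\<forall>x\<in>K. \<phi> x = h x"
proof -
  obtain J' where J': "J' \<subseteq> I - K'" "card J' = card J" "finite J'"
    using I(1) by (rule obtain_subset_with_card_n)
  obtain g where g: "strict_mono_on J g" "bij_betw g J J'"
    using ex_strict_mono_bij_betw[of J J'] \<open>finite J\<close> J' by metis
  have "g ` J \<subseteq> I - K'"
    using bij_betw_imp_surj_on[OF g(2)] J'(1) by blast
  then have "strict_mono_on (J \<union> K) (\<lambda>x. if x \<in> K then h x else g x)"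
    using strict_mono_on_Un_if[OF g(1) h(1)] assms(2) h(2) I(2) by blast
  moreover have "(\<lambda>x. if x \<in> K then h x else g x) ` J \<subseteq> I"
    using \<open>g ` J \<subseteq> I - K'\<close> assms(2) by auto
  ultimately show ?thesis
    using that by simp
qed

lemma dsubsets_mono: "J \<subseteq> J' \<Longrightarrow> dsubsets J d \<subseteq> dsubsets J' d"
  by (auto simp: dsubsets_def)

lemma image_in_dsubsets:
  assumes "inj_on \<psi> J" "\<psi> ` J \<subseteq> T" "s \<in> dsubsets J d"
  shows "\<psi> ` s \<in> dsubsets T d"
  using assms by (auto simp: dsubsets_def card_image inj_on_subset)

lemma space_gen_alg [simp]: "space (gen_alg M X N d J) = space M"
  and sets_gen_alg:
    "sets (gen_alg M X N d J) = sigma_sets (space M) {X s -` A \<inter> space M | s A. s \<in> dsubsets J d \<and> A \<in> sets N}"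
  unfolding gen_alg_def by (auto intro!: space_measure_of sets_measure_of)

lemma subalgebra_gen_alg:
  assumes "\<forall>s\<in>dsubsets J d. X s \<in> measurable M N"
  shows "subalgebra M (gen_alg M X N d J)"
  unfolding subalgebra_def sets_gen_alg using assms
  by (auto intro!: sets.sigma_sets_subset measurable_sets)

lemma measurable_gen_alg:
  assumes "\<forall>s\<in>dsubsets J d. X s \<in> measurable M N" and "s \<in> dsubsets J d"
  shows "X s \<in> measurable (gen_alg M X N d J) N"
proof (rule measurableI)
  show "X s x \<in> space N" if "x \<in> space (gen_alg M X N d J)" for x
    using assms that by (auto intro: measurable_space)
  show "X s -` A \<inter> space (gen_alg M X N d J) \<in> sets (gen_alg M X N d J)" if "A \<in> sets N" for A
    using assms(2) that unfolding sets_gen_alg by (auto intro: sigma_sets.Basic)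
qed

lemma measurable_PiM_reindex:
  assumes "\<psi> \<in> S \<rightarrow> T"
  shows "(\<lambda>x. \<lambda>s\<in>S. x (\<psi> s)) \<in> measurable (PiM T (\<lambda>_. N)) (PiM S (\<lambda>_. N))"
  using assms by (intro measurable_restrict measurable_component_singleton) auto

lemma sets_gen_algE:
  assumes meas: "\<forall>s\<in>dsubsets J d. X s \<in> measurable M N"
    and A: "A \<in> sets (gen_alg M X N d J)"
  obtains C where "C \<in> sets (PiM (dsubsets J d) (\<lambda>_. N))"
    and "A = {\<omega> \<in> space M. (\<lambda>s\<in>dsubsets J d. X s \<omega>) \<in> C}"
proof -
  let ?P = "PiM (dsubsets J d) (\<lambda>_. N)"
  let ?XJ = "\<lambda>\<omega>. \<lambda>s\<in>dsubsets J d. X s \<omega>"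
  have XJ: "?XJ \<in> measurable M ?P"
    using meas by (intro measurable_restrict) auto
  let ?V = "vimage_algebra (space M) ?XJ ?P"
  have "X s -` B \<inter> space M \<in> sets ?V" if "s \<in> dsubsets J d" "B \<in> sets N" for s B
  proof -
    have "(\<lambda>x. x s) -` B \<inter> space ?P \<in> sets ?P"
      using that by (auto intro: measurable_sets measurable_component_singleton)
    moreover have "X s -` B \<inter> space M = ?XJ -` ((\<lambda>x. x s) -` B \<inter> space ?P) \<inter> space M"
      using that measurable_space[OF XJ] by auto
    ultimately show ?thesis by (metis in_vimage_algebra)
  qed
  then have "sets (gen_alg M X N d J) \<subseteq> sets ?V"
    unfolding sets_gen_alg using sets.top[of ?V]
    by (intro sets.sigma_sets_subset') (auto simp: space_vimage_algebra)
  moreover have "?XJ \<in> space M \<rightarrow> space ?P"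
    using measurable_space[OF XJ] by blast
  ultimately obtain C where "C \<in> sets ?P" "A = ?XJ -` C \<inter> space M"
    using A by (auto simp: sets_vimage_algebra2)
  then show ?thesis using that by blast
qed

lemma reindexed_event_in_gen_alg:
  assumes "\<forall>s\<in>dsubsets I d. X s \<in> measurable M N" "\<And>s. s \<in> S \<Longrightarrow> \<psi> s \<in> dsubsets I d"
    and "C \<in> sets (PiM S (\<lambda>_. N))"
  shows "{\<omega>\<in>space M. (\<lambda>s\<in>S. X (\<psi> s) \<omega>) \<in> C} \<in> sets (gen_alg M X N d I)"
proof -
  have "(\<lambda>\<omega>. \<lambda>s\<in>S. X (\<psi> s) \<omega>) \<in> measurable (gen_alg M X N d I) (PiM S (\<lambda>_. N))"
    using assms(1,2) by (intro measurable_restrict measurable_gen_alg) auto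
  from measurable_sets[OF this assms(3)] show ?thesis
    by (simp add: vimage_def Int_def conj_commute)
qed

lemma (in finite_measure) sigma_finite_subalgebra_gen_alg:
  assumes "\<forall>s\<in>dsubsets J d. X s \<in> measurable M N"
  shows "sigma_finite_subalgebra M (gen_alg M X N d J)"
  using subalgebra_gen_alg[OF assms] finite_measure_axioms
  by (simp add: finite_measure_subalgebra_is_sigma_finite finite_measure_subalgebra_def
      finite_measure_subalgebra_axioms_def)

lemma spreadable_measure_reindex:
  assumes meas: "\<forall>s\<in>dsubsets {1..n} d. X s \<in> measurable M N"
    and sp: "spreadable M X N n d"
    and J0: "J0 \<subseteq> {1..n}" "d \<le> card J0"
    and \<phi>: "strict_mono_on J0 \<phi>" "\<phi> ` J0 \<subseteq> {1..n}"
    and J1: "J1 \<subseteq> J0" "S1 \<in> sets (PiM (dsubsets J1 d) (\<lambda>_. N))"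
    and J2: "J2 \<subseteq> J0" "S2 \<in> sets (PiM (dsubsets J2 d) (\<lambda>_. N))"
  shows "measure M {\<omega>\<in>space M. (\<lambda>s\<in>dsubsets J1 d. X (\<phi> ` s) \<omega>) \<in> S1 \<and> (\<lambda>s\<in>dsubsets J2 d. X (\<phi> ` s) \<omega>) \<in> S2}
       = measure M {\<omega>\<in>space M. (\<lambda>s\<in>dsubsets J1 d. X s \<omega>) \<in> S1 \<and> (\<lambda>s\<in>dsubsets J2 d. X s \<omega>) \<in> S2}"
proof -
  let ?P = "PiM (dsubsets J0 d) (\<lambda>_. N)"
  let ?Y = "\<lambda>\<psi> \<omega>. \<lambda>s\<in>dsubsets J0 d. X (\<psi> ` s) \<omega>"
  have ds1: "dsubsets J1 d \<subseteq> dsubsets J0 d" and ds2: "dsubsets J2 d \<subseteq> dsubsets J0 d"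
    using J1 J2 by (auto simp: dsubsets_def)
  define T where "T = {x\<in>space ?P. restrict x (dsubsets J1 d) \<in> S1 \<and> restrict x (dsubsets J2 d) \<in> S2}"
  have "T = ((\<lambda>x. restrict x (dsubsets J1 d)) -` S1 \<inter> space ?P) \<inter> ((\<lambda>x. restrict x (dsubsets J2 d)) -` S2 \<inter> space ?P)"
    by (auto simp: T_def)
  then have T: "T \<in> sets ?P"
    using measurable_sets[OF measurable_restrict_subset[OF ds1] J1(2)]
      measurable_sets[OF measurable_restrict_subset[OF ds2] J2(2)] by auto
  have event: "measure M {\<omega>\<in>space M. (\<lambda>s\<in>dsubsets J1 d. X (\<psi> ` s) \<omega>) \<in> S1 \<and> (\<lambda>s\<in>dsubsets J2 d. X (\<psi> ` s) \<omega>) \<in> S2}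
      = measure (distr M ?P (?Y \<psi>)) T" if "inj_on \<psi> J0" "\<psi> ` J0 \<subseteq> {1..n}" for \<psi>
  proof -
    have Y: "?Y \<psi> \<in> measurable M ?P"
      using meas image_in_dsubsets[OF that] by (intro measurable_restrict) auto
    then have "?Y \<psi> -` T \<inter> space M = {\<omega>\<in>space M. (\<lambda>s\<in>dsubsets J1 d. X (\<psi> ` s) \<omega>) \<in> S1 \<and> (\<lambda>s\<in>dsubsets J2 d. X (\<psi> ` s) \<omega>) \<in> S2}"
      using ds1 ds2 measurable_space[OF Y] by (auto simp: T_def restrict_restrict Int_absorb1 Int_absorb2)
    then show ?thesis
      using measure_distr[OF Y T] by simp
  qed
  have inj: "inj_on \<phi> J0"
    using \<phi>(1) by (rule strict_mono_on_imp_inj_on)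
  then have "bij_betw \<phi> J0 (\<phi> ` J0)" "card J0 = card (\<phi> ` J0)"
    by (simp_all add: inj_on_imp_bij_betw card_image)
  then have "distr M ?P (?Y \<phi>) = distr M ?P (?Y id)"
    using sp J0 \<phi> unfolding spreadable_def by simp
  then show ?thesis
    using event[OF inj \<phi>(2)] event[of id] J0 by simp
qed

lemma (in prob_space) abs_prob_Int_diff_le_cond_exp_deviation:
  assumes "sigma_finite_subalgebra M G" and A: "A \<in> sets G" and B: "B \<in> sets M"
    and h: "h \<in> borel_measurable M" "\<And>\<omega>. \<omega> \<in> space M \<Longrightarrow> h \<omega> = indicator B \<omega>"
    and "0 \<le> c"
  shows "\<bar>prob (A \<inter> B) - prob A * prob B\<bar>
    \<le> c + prob {\<omega>\<in>space M. c \<le> \<bar>real_cond_exp M G h \<omega> - expectation h\<bar>}"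
proof -
  interpret sigma_finite_subalgebra M G by fact
  define Y where "Y = real_cond_exp M G h"
  have AM: "A \<in> sets M"
    using A subalg by (auto simp: subalgebra_def)
  have h_int: "integrable M h"
    using h by (intro integrable_const_bound[where B=1]) (auto simp: indicator_def)
  have Eh: "expectation h = prob B"
    using h B by (simp cong: Bochner_Integration.integral_cong)
  have Y_int: "integrable M Y" and [measurable]: "Y \<in> borel_measurable M"
    unfolding Y_def using h_int by auto
  define E where "E = {\<omega>\<in>space M. c \<le> \<bar>Y \<omega> - prob B\<bar>}"
  have E: "E \<in> events"
    unfolding E_def by measurable
  have Y01: "AE \<omega> in M. 0 \<le> Y \<omega> \<and> Y \<omega> \<le> 1"
    unfolding Y_def using h_int h
    by (intro AE_conjI real_cond_exp_ge_c real_cond_exp_le_c) (auto simp: indicator_def)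
  have "prob (A \<inter> B) = (\<integral>\<omega>. indicator A \<omega> * h \<omega> \<partial>M)"
    using AM B h by (simp add: indicator_inter_arith[symmetric] cong: Bochner_Integration.integral_cong)
  also have "\<dots> = (\<integral>\<omega>. indicator A \<omega> * Y \<omega> \<partial>M)"
    using real_cond_exp_intA[OF h_int A] unfolding Y_def set_lebesgue_integral_def by simp
  finally have "prob (A \<inter> B) - prob A * prob B = (\<integral>\<omega>. indicator A \<omega> * (Y \<omega> - prob B) \<partial>M)"
    using AM integrable_mult_indicator[OF AM Y_int] integrable_mult_indicator[OF AM integrable_const[of "prob B"]]
    by (simp add: right_diff_distrib Bochner_Integration.integral_diff)
  also have "\<bar>\<dots>\<bar> \<le> (\<integral>\<omega>. \<bar>indicator A \<omega> * (Y \<omega> - prob B)\<bar> \<partial>M)"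
    by (rule integral_abs_bound)
  also have "\<dots> \<le> (\<integral>\<omega>. c + indicator E \<omega> \<partial>M)"
  proof (rule integral_mono_AE')
    show "AE \<omega> in M. \<bar>indicator A \<omega> * (Y \<omega> - prob B)\<bar> \<le> c + indicator E \<omega>"
      using Y01 AE_space
    proof eventually_elim
      case (elim \<omega>)
      then have "\<bar>Y \<omega> - prob B\<bar> \<le> 1"
        using measure_nonneg[of M B] prob_le_1[of B] by linarith
      then show ?case
        using elim \<open>0 \<le> c\<close> by (auto simp: E_def indicator_def)
    qed
  qed (use \<open>0 \<le> c\<close> E in \<open>auto simp: less_top[symmetric]\<close>)
  also have "\<dots> = c + prob E"
    using E by (simp add: Bochner_Integration.integral_add less_top[symmetric] prob_space)
  finally show ?thesis
    unfolding Eh E_def Y_def .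
qed

lemma spreadable_abs_prob_Int_diff_le_cond_exp_deviation:
  assumes "prob_space M"
    and meas: "\<forall>s\<in>dsubsets {1..n} d. X s \<in> measurable M N"
    and sp: "spreadable M X N n d"
    and J: "J \<subseteq> {1..n}" "d \<le> card J" and K: "K \<subseteq> {1..n}" and JK: "\<forall>x\<in>J. \<forall>y\<in>K. x < y"
    and C: "C \<in> sets (PiM (dsubsets J d) (\<lambda>_. N))" and D: "D \<in> sets (PiM (dsubsets K d) (\<lambda>_. N))"
    and h: "strict_mono_on K h" "h ` K \<subseteq> K'" "K' \<subseteq> {1..n}"
    and I: "I \<subseteq> {1..n}" "card J \<le> card (I - K')" "\<forall>x\<in>I - K'. \<forall>y\<in>K'. x < y"
    and F: "F \<in> borel_measurable M"
      "\<And>\<omega>. \<omega> \<in> space M \<Longrightarrow> F \<omega> = indicator {\<omega>\<in>space M. (\<lambda>s\<in>dsubsets K d. X (h ` s) \<omega>) \<in> D} \<omega>"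
    and "0 \<le> c"
  defines "A \<equiv> {\<omega>\<in>space M. (\<lambda>s\<in>dsubsets J d. X s \<omega>) \<in> C}"
    and "B \<equiv> {\<omega>\<in>space M. (\<lambda>s\<in>dsubsets K d. X s \<omega>) \<in> D}"
  shows "\<bar>measure M (A \<inter> B) - measure M A * measure M B\<bar>
    \<le> c + measure M {\<omega>\<in>space M. c \<le> \<bar>real_cond_exp M (gen_alg M X N d I) F \<omega> - (\<integral>\<omega>. F \<omega> \<partial>M)\<bar>}"
proof -
  interpret prob_space M by fact
  have fin: "finite J" "finite K"
    using J K finite_subset by blast+
  obtain \<phi> where \<phi>: "strict_mono_on (J \<union> K) \<phi>" "\<phi> ` J \<subseteq> I" "\<forall>x\<in>K. \<phi> x = h x"
    using ex_strict_mono_extension[OF fin(1) JK h(1,2) I(2,3)] by blast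
  have inj: "inj_on \<phi> (J \<union> K)"
    using \<phi>(1) by (rule strict_mono_on_imp_inj_on)
  have "\<phi> ` (J \<union> K) \<subseteq> I \<union> K'"
    using \<phi>(2,3) h(2) by auto
  then have \<phi>_range: "\<phi> ` (J \<union> K) \<subseteq> {1..n}"
    using I(1) h(3) by blast
  have \<phi>_K: "\<phi> ` s = h ` s" if "s \<in> dsubsets K d" for s
    using that \<phi>(3) by (intro image_cong) (auto simp: dsubsets_def)
  define A' where "A' = {\<omega>\<in>space M. (\<lambda>s\<in>dsubsets J d. X (\<phi> ` s) \<omega>) \<in> C}"
  define B' where "B' = {\<omega>\<in>space M. (\<lambda>s\<in>dsubsets K d. X (\<phi> ` s) \<omega>) \<in> D}"
  have "J \<union> K \<subseteq> {1..n}" "d \<le> card (J \<union> K)"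
    using J K card_mono[OF _ Un_upper1, of J K] fin by auto
  note reindex = spreadable_measure_reindex[OF meas sp this \<phi>(1) \<phi>_range]
  have "A \<inter> B = {\<omega>\<in>space M. (\<lambda>s\<in>dsubsets J d. X s \<omega>) \<in> C \<and> (\<lambda>s\<in>dsubsets K d. X s \<omega>) \<in> D}"
    "A' \<inter> B' = {\<omega>\<in>space M. (\<lambda>s\<in>dsubsets J d. X (\<phi> ` s) \<omega>) \<in> C \<and> (\<lambda>s\<in>dsubsets K d. X (\<phi> ` s) \<omega>) \<in> D}"
    unfolding A_def B_def A'_def B'_def by auto
  then have "prob A' = prob A" "prob B' = prob B" "prob (A' \<inter> B') = prob (A \<inter> B)"
    using reindex[OF Un_upper1 C Un_upper1 C] reindex[OF Un_upper2 D Un_upper2 D]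
      reindex[OF Un_upper1 C Un_upper2 D]
    unfolding A_def B_def A'_def B'_def by auto
  moreover have "A' \<in> sets (gen_alg M X N d I)"
    unfolding A'_def using meas dsubsets_mono[OF I(1)] inj \<phi>(2) C
    by (intro reindexed_event_in_gen_alg) (auto intro: image_in_dsubsets inj_on_subset)
  moreover have "B' \<in> events"
  proof -
    have "B' \<in> sets (gen_alg M X N d {1..n})"
      unfolding B'_def using dsubsets_mono[of K "J \<union> K" d]
      by (intro reindexed_event_in_gen_alg[OF meas _ D] image_in_dsubsets[OF inj \<phi>_range]) auto
    then show ?thesis
      using subalgebra_gen_alg[OF meas] by (auto simp: subalgebra_def)
  qed
  moreover have "F \<omega> = indicator B' \<omega>" if "\<omega> \<in> space M" for \<omega>
    using F(2)[OF that] \<phi>_K unfolding B'_def by (simp cong: restrict_cong)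
  ultimately show ?thesis
    using abs_prob_Int_diff_le_cond_exp_deviation[of "gen_alg M X N d I" A' B' F c]
      sigma_finite_subalgebra_gen_alg[of I d X N] meas dsubsets_mono[OF I(1)] F(1) \<open>0 \<le> c\<close>
    by auto
qed

lemma spreadable_dependent_events_imp_cond_exp_deviation:
  assumes "prob_space M"
    and meas: "\<forall>s\<in>dsubsets {1..n} d. X s \<in> measurable M N"
    and sp: "spreadable M X N n d"
    and J: "J \<subseteq> {1..n}" "d \<le> card J" and K: "K \<subseteq> {1..n}" and JK: "\<forall>x\<in>J. \<forall>y\<in>K. x < y"
    and A: "A \<in> sets (gen_alg M X N d J)" and B: "B \<in> sets (gen_alg M X N d K)"
    and l: "card J + card K \<le> l" "l \<le> n"
    and dependent: "0 < \<beta>" "\<beta> < \<bar>measure M (A \<inter> B) - measure M A * measure M B\<bar>"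
  shows "\<exists>f. f \<in> borel_measurable (PiM (dsubsets {1..n} d) (\<lambda>_. N)) \<and> (\<forall>x. f x \<in> {0, 1}) \<and>
    (\<forall>I. I \<subseteq> {1..n} \<and> card I = l \<longrightarrow>
       measure M {\<omega> \<in> space M.
          \<bar>real_cond_exp M (gen_alg M X N d I) (\<lambda>\<omega>. f (\<lambda>s\<in>dsubsets {1..n} d. X s \<omega>)) \<omega>
           - (\<integral>\<omega>'. f (\<lambda>s\<in>dsubsets {1..n} d. X s \<omega>') \<partial>M)\<bar> \<ge> \<beta> / 2} \<ge> \<beta> / 2)"
proof -
  let ?Pn = "PiM (dsubsets {1..n} d) (\<lambda>_. N)"
  let ?XN = "\<lambda>\<omega>. \<lambda>s\<in>dsubsets {1..n} d. X s \<omega>"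
  obtain C where C: "C \<in> sets (PiM (dsubsets J d) (\<lambda>_. N))" "A = {\<omega>\<in>space M. (\<lambda>s\<in>dsubsets J d. X s \<omega>) \<in> C}"
    using sets_gen_algE[OF _ A] meas dsubsets_mono[OF J(1)] by blast
  obtain D where D: "D \<in> sets (PiM (dsubsets K d) (\<lambda>_. N))" "B = {\<omega>\<in>space M. (\<lambda>s\<in>dsubsets K d. X s \<omega>) \<in> D}"
    using sets_gen_algE[OF _ B] meas dsubsets_mono[OF K] by blast
  define Ks where "Ks = {n - card K + 1..n}"
  have Ks: "Ks \<subseteq> {1..n}" "card Ks = card K"
    using l by (auto simp: Ks_def)
  obtain h where h: "strict_mono_on K h" "bij_betw h K Ks"
    using ex_strict_mono_bij_betw[of K Ks] Ks K finite_subset by (metis finite_atLeastAtMost Ks_def)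
  have hK: "h ` K \<subseteq> Ks"
    using bij_betw_imp_surj_on[OF h(2)] by simp
  have h_ds: "h ` s \<in> dsubsets {1..n} d" if "s \<in> dsubsets K d" for s
    using image_in_dsubsets[OF bij_betw_imp_inj_on[OF h(2)] _ that] hK Ks(1) by simp
  define f :: "(nat set \<Rightarrow> 'b) \<Rightarrow> real" where "f x = indicator D (\<lambda>s\<in>dsubsets K d. x (h ` s))" for x
  have f: "f \<in> borel_measurable ?Pn"
    using measurable_compose[OF measurable_PiM_reindex[of "\<lambda>s. h ` s"] borel_measurable_indicator[OF D(1)]] h_ds
    unfolding f_def by auto
  moreover have "\<forall>x. f x \<in> {0, 1}"
    by (simp add: f_def indicator_def)
  moreover have "measure M {\<omega> \<in> space M. \<bar>real_cond_exp M (gen_alg M X N d I) (\<lambda>\<omega>. f (?XN \<omega>)) \<omega>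
      - (\<integral>\<omega>. f (?XN \<omega>) \<partial>M)\<bar> \<ge> \<beta> / 2} \<ge> \<beta> / 2" if I: "I \<subseteq> {1..n}" "card I = l" for I
  proof -
    have "\<bar>measure M (A \<inter> B) - measure M A * measure M B\<bar>
      \<le> \<beta> / 2 + measure M {\<omega>\<in>space M. \<beta> / 2 \<le> \<bar>real_cond_exp M (gen_alg M X N d I) (\<lambda>\<omega>. f (?XN \<omega>)) \<omega>
                                         - (\<integral>\<omega>. f (?XN \<omega>) \<partial>M)\<bar>}"
      unfolding C(2) D(2)
    proof (rule spreadable_abs_prob_Int_diff_le_cond_exp_deviation[OF \<open>prob_space M\<close> meas sp J K JK C(1) D(1) h(1) hK Ks(1) I(1)])
      show "card J \<le> card (I - Ks)" "\<forall>x\<in>I - Ks. \<forall>y\<in>Ks. x < y"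
        using I l Ks diff_card_le_card_Diff[of Ks I] by (auto simp: Ks_def)
      have "?XN \<in> measurable M ?Pn"
        using meas by (intro measurable_restrict) auto
      then show "(\<lambda>\<omega>. f (?XN \<omega>)) \<in> borel_measurable M"
        using measurable_compose[OF _ f] by (simp add: comp_def)
      show "f (?XN \<omega>) = indicator {\<omega>\<in>space M. (\<lambda>s\<in>dsubsets K d. X (h ` s) \<omega>) \<in> D} \<omega>"
        if "\<omega> \<in> space M" for \<omega>
        using that h_ds by (simp add: f_def indicator_def cong: restrict_cong)
    qed (use dependent in simp)
    with dependent show ?thesis
      by linarith
  qed
  ultimately show ?thesis
    by blast
qed

theorem proposition2p8:
  fixes M :: "'a measure" and X :: "nat set \<Rightarrow> 'a \<Rightarrow> 'b" and N :: "'b measure"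
    and n d l :: nat and \<beta> :: real
  assumes "prob_space M"
    and "0 < d" and "d \<le> l" and "l \<le> n"
    and "0 < \<beta>" and "\<beta> \<le> 1"
    and "\<forall>s \<in> dsubsets {1..n} d. X s \<in> measurable M N"
    and "spreadable M X N n d"
    and "\<not> dissociated M X N n d \<beta> l"
  shows "\<exists>f. f \<in> borel_measurable (PiM (dsubsets {1..n} d) (\<lambda>_. N)) \<and> (\<forall>x. f x \<in> {0, 1}) \<and>
    (\<forall>I. I \<subseteq> {1..n} \<and> card I = l \<longrightarrow>
       measure M {\<omega> \<in> space M.
          \<bar>real_cond_exp M (gen_alg M X N d I) (\<lambda>\<omega>. f (\<lambda>s\<in>dsubsets {1..n} d. X s \<omega>)) \<omega>
           - (\<integral>\<omega>'. f (\<lambda>s\<in>dsubsets {1..n} d. X s \<omega>') \<partial>M)\<bar> \<ge> \<beta> / 2} \<ge> \<beta> / 2)"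
proof -
  obtain J K A B where J: "J \<subseteq> {1..n}" "d \<le> card J" and K: "K \<subseteq> {1..n}" "d \<le> card K"
    and l: "card J + card K \<le> l" and JK: "Max J < Min K"
    and A: "A \<in> sets (gen_alg M X N d J)" and B: "B \<in> sets (gen_alg M X N d K)"
    and dependent: "\<beta> < \<bar>measure M (A \<inter> B) - measure M A * measure M B\<bar>"
    using assms(9) unfolding dissociated_def by (auto simp: not_le)
  have "finite J" "finite K" "J \<noteq> {}" "K \<noteq> {}"
    using J K \<open>0 < d\<close> finite_subset by auto
  then have "\<forall>x\<in>J. \<forall>y\<in>K. x < y"
    using JK by (meson Max_ge Min_le le_less_trans less_le_trans)
  then show ?thesis
    using spreadable_dependent_events_imp_cond_exp_deviation[OF assms(1,7,8) J K(1) _ A B l \<open>l \<le> n\<close>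
        \<open>0 < \<beta>\<close> dependent]
    by blast
qed

end
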